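(* Let $P,\widehat P$ be transition kernels on finite $\mathcal S\times\mathcal A$, $r:\mathcal S\times\mathcal A\to[0,1]$, $\gamma\in(0,1)$, $n$ a positive integer, $\pi$ a policy, $\overline V=V^\pi_\gamma-(\min_sV^\pi_\gamma(s))\mathbf 1$ and $\ell=\lceil\log_2\log_2(\|\overline V\|_\infty+4)\rceil$. Suppose that for some $\alpha>0$ the elementwise inequalities $$\big|(\widehat P_\pi-P_\pi)\overline V^{\circ2^k}\big|\le\sqrt{\frac{\alpha\,\mathbb V_{P_\pi}[\overline V^{\circ2^k}]}{n}}+\frac{\alpha\,2^k}{n}\big(\|\overline V\|_\infty+1\big)^{2^k}\mathbf 1$$ hold for all $k=0,\dots,\ell$. Then $$\|\widehat V^\pi_\gamma-V^\pi_\gamma\|_\infty\le\frac{4(\ell+1)\alpha}{(1-\gamma)n}\big(\|\overline V\|_\infty+1\big)+\frac{2(\ell+1)}{1-\gamma}\sqrt{\frac{2\alpha(\|\overline V\|_\infty+1)}{n}} .$$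
   Context: $P_\pi(s,s')=\sum_a\pi(a|s)P(s'|s,a)$, $r_\pi(s)=\sum_a\pi(a|s)r(s,a)$; $V^\pi_\gamma=(I-\gamma P_\pi)^{-1}r_\pi$, $\widehat V^\pi_\gamma=(I-\gamma\widehat P_\pi)^{-1}r_\pi$. $x^{\circ m}$ is the elementwise $m$-th power; $|\cdot|$ and $\sqrt{\cdot}$ act elementwise; $\mathbf 1$ all-ones. For $x\in\mathbb R^{\mathcal S}$, $\mathbb V_{P_\pi}[x]\in\mathbb R^{\mathcal S}$ is the next-state variance $\mathbb V_{P_\pi}[x](s)=\sum_{s'}P_\pi(s,s')\big(x(s')-\sum_{s''}P_\pi(s,s'')x(s'')\big)^2=(P_\pi x^{\circ2}-(P_\pi x)^{\circ2})(s)$. *)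

theory Defs
  imports "HOL-Analysis.Analysis"
begin

definition is_kernel :: "('s::finite \<Rightarrow> 'a::finite \<Rightarrow> 's \<Rightarrow> real) \<Rightarrow> bool" where
  "is_kernel P \<longleftrightarrow> (\<forall>s a s'. 0 \<le> P s a s') \<and> (\<forall>s a. (\<Sum>s'\<in>UNIV. P s a s') = 1)"

definition is_policy :: "('s::finite \<Rightarrow> 'a::finite \<Rightarrow> real) \<Rightarrow> bool" where
  "is_policy \<pi> \<longleftrightarrow> (\<forall>s a. 0 \<le> \<pi> s a) \<and> (\<forall>s. (\<Sum>a\<in>UNIV. \<pi> s a) = 1)"

definition Ppi :: "('s::finite \<Rightarrow> 'a::finite \<Rightarrow> 's \<Rightarrow> real) \<Rightarrow> ('s \<Rightarrow> 'a \<Rightarrow> real) \<Rightarrow> real^'s^'s" where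
  "Ppi P \<pi> = (\<chi> s s'. \<Sum>a\<in>UNIV. \<pi> s a * P s a s')"

definition rpi :: "('s::finite \<Rightarrow> 'a::finite \<Rightarrow> real) \<Rightarrow> ('s \<Rightarrow> 'a \<Rightarrow> real) \<Rightarrow> real^'s" where
  "rpi r \<pi> = (\<chi> s. \<Sum>a\<in>UNIV. \<pi> s a * r s a)"

definition Vpi :: "real \<Rightarrow> ('s::finite \<Rightarrow> 'a::finite \<Rightarrow> 's \<Rightarrow> real) \<Rightarrow> ('s \<Rightarrow> 'a \<Rightarrow> real) \<Rightarrow> ('s \<Rightarrow> 'a \<Rightarrow> real) \<Rightarrow> real^'s" where
  "Vpi \<gamma> P \<pi> r = matrix_inv (mat 1 - \<gamma> *\<^sub>R Ppi P \<pi>) *v rpi r \<pi>"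

definition supnorm :: "real^'s::finite \<Rightarrow> real" where
  "supnorm x = Max (range (\<lambda>s. \<bar>x $ s\<bar>))"

definition vpow :: "real^'s::finite \<Rightarrow> nat \<Rightarrow> real^'s" where
  "vpow x m = (\<chi> s. (x $ s) ^ m)"

definition nsvar :: "real^'s::finite^'s \<Rightarrow> real^'s \<Rightarrow> real^'s" where
  "nsvar M x = M *v vpow x 2 - vpow (M *v x) 2"

end

theory Submission
  imports Defs
begin

text \<open>
  Write \<open>R\<close> for the resolvent \<open>(I - \<gamma> Phat)^-1\<close>. Then \<open>Vhat - V = \<gamma> R (Phat - P) Vbar\<close>, so the
  hypothesis for \<open>k = 0\<close> bounds the error by the \<open>R\<close>-weighted standard deviation of \<open>Vbar\<close> plus
  a lower-order term. A discounted law of total variance, driven by \<open>Vbar - \<gamma> P Vbar \<le> 1\<close>,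
  bounds the \<open>R\<close>-weighted variance of \<open>Vbar^(2^k)\<close> by the \<open>R\<close>-weighted deviation
  \<open>|(Phat - P) Vbar^(2^(k+1))|\<close>, which the hypothesis for \<open>k + 1\<close> controls by the standard
  deviation of the next power. Normalised by \<open>(\<parallel>Vbar\<parallel> + 1)^(2^k)\<close>, this is a recursion
  \<open>v k \<le> \<surd>(2^(k+1)) Q + t \<surd>(v (k+1))\<close> with \<open>t = \<surd>(\<alpha>/n)\<close>. The trivial bound closes it at
  level \<open>\<ell>\<close>, and the choice of \<open>\<ell>\<close> makes the leftover term \<open>t^(2 - 2^-\<ell>)\<close> cost at most \<open>2 Q\<close>.
\<close>

section \<open>Nonnegative matrices with constant row sums\<close>

definition nonneg_rowsum :: "real^'n::finite^'m::finite \<Rightarrow> real \<Rightarrow> bool" where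
  "nonneg_rowsum M \<rho> \<longleftrightarrow> (\<forall>i j. 0 \<le> M$i$j) \<and> (\<forall>i. (\<Sum>j\<in>UNIV. M$i$j) = \<rho>)"

abbreviation stochastic :: "real^'n::finite^'m::finite \<Rightarrow> bool" where
  "stochastic M \<equiv> nonneg_rowsum M 1"

context
  fixes M :: "real^'n::finite^'m::finite" and \<rho> :: real
  assumes M: "nonneg_rowsum M \<rho>"
begin

lemma nonneg_rowsum_mv_mono: "(\<And>j. x$j \<le> y$j) \<Longrightarrow> (M *v x)$i \<le> (M *v y)$i"
  using M by (auto simp: nonneg_rowsum_def matrix_vector_mult_def intro!: sum_mono mult_left_mono)

lemma nonneg_rowsum_mv_nonneg: "(\<And>j. 0 \<le> x$j) \<Longrightarrow> 0 \<le> (M *v x)$i"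
  using M by (auto simp: nonneg_rowsum_def matrix_vector_mult_def intro!: sum_nonneg)

lemma nonneg_rowsum_mv_const: "M *v (c *\<^sub>R 1) = (\<rho> * c) *\<^sub>R 1"
  using M by (simp add: vec_eq_iff nonneg_rowsum_def matrix_vector_mult_def flip: sum_distrib_right)

lemma nonneg_rowsum_mv_affine: "M *v (a *\<^sub>R x + b *\<^sub>R 1) = a *\<^sub>R (M *v x) + (\<rho> * b) *\<^sub>R 1"
  using nonneg_rowsum_mv_const[of b]
  by (simp add: matrix_vector_right_distrib matrix_vector_mult_scaleR)

lemma nonneg_rowsum_mv_le_const: "(\<And>j. x$j \<le> c) \<Longrightarrow> (M *v x)$i \<le> \<rho> * c"
  using nonneg_rowsum_mv_mono[of x "c *\<^sub>R 1" i] by (simp add: nonneg_rowsum_mv_const)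

lemma nonneg_rowsum_mv_ge_const: "(\<And>j. c \<le> x$j) \<Longrightarrow> \<rho> * c \<le> (M *v x)$i"
  using nonneg_rowsum_mv_mono[of "c *\<^sub>R 1" x i] by (simp add: nonneg_rowsum_mv_const)

lemma nonneg_rowsum_mv_abs: "\<bar>(M *v x)$i\<bar> \<le> (M *v (\<chi> j. \<bar>x$j\<bar>))$i"
proof -
  have "\<bar>\<Sum>j\<in>UNIV. M$i$j * x$j\<bar> \<le> (\<Sum>j\<in>UNIV. \<bar>M$i$j * x$j\<bar>)" by (rule sum_abs)
  also have "\<dots> = (\<Sum>j\<in>UNIV. M$i$j * \<bar>x$j\<bar>)" using M by (simp add: nonneg_rowsum_def abs_mult)
  finally show ?thesis by (simp add: matrix_vector_mult_def)
qed

lemma nonneg_rowsum_mv_square: "((M *v x)$i)^2 \<le> \<rho> * (M *v vpow x 2)$i"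
proof -
  let ?w = "\<lambda>j. sqrt (M$i$j)"
  have "(\<Sum>j\<in>UNIV. ?w j * (?w j * x$j))^2 \<le> (\<Sum>j\<in>UNIV. (?w j)^2) * (\<Sum>j\<in>UNIV. (?w j * x$j)^2)"
    by (rule Cauchy_Schwarz_ineq_sum)
  then show ?thesis
    using M by (simp add: nonneg_rowsum_def matrix_vector_mult_def vpow_def power_mult_distrib
        flip: mult.assoc)
qed

end

section \<open>The resolvent of a stochastic matrix\<close>

definition resolvent :: "real \<Rightarrow> real^'n::finite^'n \<Rightarrow> real^'n^'n" where
  "resolvent \<gamma> A = matrix_inv (mat 1 - \<gamma> *\<^sub>R A)"

lemma matrix_inv_invertible:
  assumes "invertible A"
  shows "matrix_inv A ** A = mat 1" "A ** matrix_inv A = mat 1"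
  using someI_ex[OF assms[unfolded invertible_def]] by (auto simp: matrix_inv_def)

lemma mat_1_minus_scaleR_mv:
  fixes A :: "real^'n::finite^'n"
  shows "(mat 1 - c *\<^sub>R A) *v x = x - c *\<^sub>R (A *v x)"
  by (simp add: matrix_vector_mult_diff_rdistrib scaleR_matrix_vector_assoc)

context
  fixes A :: "real^'n::finite^'n" and \<gamma> :: real
  assumes A: "stochastic A" and \<gamma>: "0 \<le> \<gamma>" "\<gamma> < 1"
begin

text \<open>At a minimal entry \<open>i\<close> of \<open>x\<close> the average \<open>(A x) i\<close> is at least \<open>x i\<close>, so
  \<open>x - \<gamma> A x \<ge> 0\<close> forces \<open>(1 - \<gamma>) x i \<ge> 0\<close>.\<close>

lemma discounted_minimum_principle:
  assumes "\<And>i. 0 \<le> ((mat 1 - \<gamma> *\<^sub>R A) *v x)$i"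
  shows "0 \<le> x$i"
proof -
  have "Min (range (\<lambda>j. x$j)) \<in> range (\<lambda>j. x$j)"
    by (rule Min_in) auto
  then obtain i0 where "x$i0 = Min (range (\<lambda>j. x$j))"
    by (metis rangeE)
  then have i0: "x$i0 \<le> x$j" for j
    by simp
  have "x$i0 \<le> (A *v x)$i0"
    using nonneg_rowsum_mv_ge_const[OF A, of "x$i0" x] i0 by simp
  moreover have "0 \<le> x$i0 - \<gamma> * (A *v x)$i0"
    using assms[of i0] by (simp add: mat_1_minus_scaleR_mv)
  ultimately have "0 \<le> (1 - \<gamma>) * x$i0"
    using mult_left_mono[OF \<open>x$i0 \<le> (A *v x)$i0\<close> \<gamma>(1)] by (simp add: algebra_simps)
  then have "0 \<le> x$i0"
    using \<gamma> by (simp add: zero_le_mult_iff)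
  then show ?thesis
    using i0[of i] by linarith
qed

lemma invertible_discounted: "invertible (mat 1 - \<gamma> *\<^sub>R A)"
proof -
  have "x = 0" if "(mat 1 - \<gamma> *\<^sub>R A) *v x = 0" for x
  proof -
    have "0 \<le> x$i" "0 \<le> (-x)$i" for i
      using discounted_minimum_principle[of x] discounted_minimum_principle[of "-x"] that
      by (simp_all add: matrix_vector_mult_diff_distrib[of _ 0 x, simplified])
    then show ?thesis by (simp add: vec_eq_iff) (meson antisym neg_0_le_iff_le)
  qed
  then show ?thesis
    using matrix_left_invertible_ker invertible_left_inverse by blast
qed

lemma resolvent_inverse:
  "resolvent \<gamma> A ** (mat 1 - \<gamma> *\<^sub>R A) = mat 1" "(mat 1 - \<gamma> *\<^sub>R A) ** resolvent \<gamma> A = mat 1"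
  using invertible_discounted
  unfolding resolvent_def by (rule matrix_inv_invertible)+

lemma resolvent_bellman: "(mat 1 - \<gamma> *\<^sub>R A) *v (resolvent \<gamma> A *v r) = r"
  using resolvent_inverse(2) by (simp add: matrix_vector_mul_assoc)

lemma resolvent_mv_discounted: "resolvent \<gamma> A *v ((mat 1 - \<gamma> *\<^sub>R A) *v x) = x"
  using resolvent_inverse(1) by (simp add: matrix_vector_mul_assoc)

lemma resolvent_mv_step: "\<gamma> *\<^sub>R (resolvent \<gamma> A *v (A *v y)) = resolvent \<gamma> A *v y - y"
proof -
  have "resolvent \<gamma> A *v y - \<gamma> *\<^sub>R (resolvent \<gamma> A *v (A *v y)) = y"
    using resolvent_mv_discounted[of y]
    by (simp only: mat_1_minus_scaleR_mv matrix_vector_mult_diff_distrib matrix_vector_mult_scaleR)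
  then show ?thesis by (simp add: algebra_simps)
qed

lemma resolvent_nonneg: "0 \<le> resolvent \<gamma> A $ i $ j"
proof -
  have "0 \<le> (resolvent \<gamma> A *v axis j 1)$i"
    by (rule discounted_minimum_principle) (simp add: resolvent_bellman axis_def)
  then show ?thesis
    by (simp add: matrix_vector_mult_def axis_def if_distrib cong: if_cong)
qed

lemma resolvent_mv_one: "resolvent \<gamma> A *v 1 = (1 / (1 - \<gamma>)) *\<^sub>R 1"
proof -
  have "(mat 1 - \<gamma> *\<^sub>R A) *v 1 = (1 - \<gamma>) *\<^sub>R 1"
    using nonneg_rowsum_mv_const[OF A, of 1] by (simp add: mat_1_minus_scaleR_mv scaleR_diff_left)
  then have "(1 - \<gamma>) *\<^sub>R (resolvent \<gamma> A *v 1) = 1"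
    using resolvent_mv_discounted[of 1] by (simp add: matrix_vector_mult_scaleR)
  from arg_cong[OF this, of "\<lambda>v. (1 / (1 - \<gamma>)) *\<^sub>R v"] show ?thesis
    using \<gamma> by simp
qed

lemma resolvent_nonneg_rowsum: "nonneg_rowsum (resolvent \<gamma> A) (1 / (1 - \<gamma>))"
  unfolding nonneg_rowsum_def
proof (intro conjI allI resolvent_nonneg)
  fix i
  have "(resolvent \<gamma> A *v 1)$i = 1 / (1 - \<gamma>)"
    by (simp add: resolvent_mv_one)
  then show "(\<Sum>j\<in>UNIV. resolvent \<gamma> A $ i $ j) = 1 / (1 - \<gamma>)"
    by (simp add: matrix_vector_mult_def)
qed

end

lemma resolvent_perturbation:
  assumes "stochastic A" "stochastic Ah" "0 \<le> \<gamma>" "\<gamma> < 1"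
  shows "resolvent \<gamma> Ah *v r - resolvent \<gamma> A *v r
           = \<gamma> *\<^sub>R (resolvent \<gamma> Ah *v ((Ah - A) *v (resolvent \<gamma> A *v r)))"
proof -
  define V where "V = resolvent \<gamma> A *v r"
  define Vh where "Vh = resolvent \<gamma> Ah *v r"
  have bellman: "Vh - \<gamma> *\<^sub>R (Ah *v Vh) = r" "V - \<gamma> *\<^sub>R (A *v V) = r"
    using resolvent_bellman[OF assms(2-4), of r] resolvent_bellman[OF assms(1,3,4), of r]
    by (simp_all add: V_def Vh_def mat_1_minus_scaleR_mv)
  have "(mat 1 - \<gamma> *\<^sub>R Ah) *v (Vh - V)
      = (Vh - \<gamma> *\<^sub>R (Ah *v Vh)) - (V - \<gamma> *\<^sub>R (A *v V)) + \<gamma> *\<^sub>R ((Ah - A) *v V)"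
    by (simp add: mat_1_minus_scaleR_mv matrix_vector_mult_diff_distrib
        matrix_vector_mult_diff_rdistrib scaleR_diff_right flip: scaleR_matrix_vector_assoc)
  also have "\<dots> = \<gamma> *\<^sub>R ((Ah - A) *v V)"
    by (simp add: bellman)
  finally show ?thesis
    using resolvent_mv_discounted[OF assms(2-4), of "Vh - V"]
    by (simp add: matrix_vector_mult_scaleR V_def Vh_def)
qed

lemma stochastic_diff_mv_shift:
  assumes "stochastic A" "stochastic Ah"
  shows "(Ah - A) *v (x - c *\<^sub>R 1) = (Ah - A) *v x"
  using nonneg_rowsum_mv_const[OF assms(1), of c] nonneg_rowsum_mv_const[OF assms(2), of c]
  by (simp add: matrix_vector_mult_diff_distrib matrix_vector_mult_diff_rdistrib)

section \<open>Moments and variances\<close>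

lemma vpow_nth [simp]: "vpow x m $ i = (x $ i) ^ m"
  by (simp add: vpow_def)

lemma vpow_1 [simp]: "vpow x 1 = x" "vpow x (Suc 0) = x"
  by (simp_all add: vec_eq_iff)

lemma vpow_vpow: "vpow (vpow x a) b = vpow x (a * b)"
  by (simp add: vec_eq_iff power_mult)

lemma nsvar_nonneg: "stochastic A \<Longrightarrow> 0 \<le> nsvar A x $ i"
  using nonneg_rowsum_mv_square[of A 1 x i] by (simp add: nsvar_def)

lemma stochastic_mv_power_le:
  assumes "stochastic A"
  shows "((A *v x)$i) ^ (2^k) \<le> (A *v vpow x (2^k))$i"
proof (induction k arbitrary: x)
  case 0
  then show ?case by (simp add: vpow_def)
next
  case (Suc k)
  have "((A *v x)$i) ^ (2 ^ Suc k) = (((A *v x)$i)^2) ^ (2^k)"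
    by (simp add: power_mult[symmetric] mult.commute)
  also have "\<dots> \<le> ((A *v vpow x 2)$i) ^ (2^k)"
    using nonneg_rowsum_mv_square[OF assms, of x i] by (intro power_mono) auto
  also have "\<dots> \<le> (A *v vpow x (2 ^ Suc k))$i"
    using Suc.IH[of "vpow x 2"] by (simp add: vpow_vpow mult.commute)
  finally show ?case .
qed

lemma power_diff_le_mean_value:
  fixes a b :: real
  assumes "0 \<le> b" "b \<le> a"
  shows "a^N - b^N \<le> real N * a^(N-1) * (a - b)"
proof (induction N)
  case 0
  then show ?case by simp
next
  case (Suc N)
  have "a^(Suc N) - b^(Suc N) = a * (a^N - b^N) + b^N * (a - b)"
    by (simp add: algebra_simps)
  also have "\<dots> \<le> a * (real N * a^(N-1) * (a - b)) + a^N * (a - b)"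
    using Suc assms by (intro add_mono mult_left_mono mult_right_mono power_mono) auto
  also have "\<dots> = real (Suc N) * a^(Suc N - 1) * (a - b)"
    by (cases N) (simp_all add: algebra_simps)
  finally show ?case .
qed

lemma power_diff_le_of_diff_le_1:
  fixes a b B :: real
  assumes "0 \<le> a" "a \<le> B" "0 \<le> b" "a - b \<le> 1"
  shows "a^N - b^N \<le> real N * B^(N-1)"
proof (cases "b \<le> a")
  case True
  have "a^N - b^N \<le> real N * a^(N-1) * (a - b)"
    using assms True by (intro power_diff_le_mean_value) auto
  also have "\<dots> \<le> real N * B^(N-1) * 1"
    using assms True by (intro mult_mono mult_left_mono power_mono) auto
  finally show ?thesis by simp
next
  case False
  then have "a^N \<le> b^N"
    using assms by (intro power_mono) auto
  moreover have "0 \<le> real N * B^(N-1)"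
    using assms by simp
  ultimately show ?thesis
    by linarith
qed

lemma power_sub_discounted_square_le:
  fixes a p q B \<gamma> :: real
  assumes "0 \<le> a" "a \<le> B" "0 \<le> p" "a - \<gamma> * p \<le> 1" "0 \<le> \<gamma>" "\<gamma> \<le> 1" "p ^ m \<le> q" "0 < m"
  shows "a ^ (2 * m) - \<gamma> * q^2 \<le> real (2 * m) * B ^ (2 * m - 1)"
proof -
  have "(\<gamma> * p) ^ (2 * m) = \<gamma> ^ (2 * m) * (p ^ m)^2"
    by (simp add: power_mult_distrib power_mult mult.commute)
  also have "\<dots> \<le> \<gamma> * q^2"
    using assms power_decreasing[of 1 "2 * m" \<gamma>]
    by (intro mult_mono power_mono) auto
  finally have "(\<gamma> * p) ^ (2 * m) \<le> \<gamma> * q^2" .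
  moreover have "a ^ (2 * m) - (\<gamma> * p) ^ (2 * m) \<le> real (2 * m) * B ^ (2 * m - 1)"
    using assms by (intro power_diff_le_of_diff_le_1) auto
  ultimately show ?thesis by linarith
qed

lemma stochastic_power_gap_le:
  assumes A: "stochastic A" and \<gamma>: "0 \<le> \<gamma>" "\<gamma> \<le> 1"
    and y: "\<And>j. 0 \<le> y$j" "\<And>j. y$j \<le> B" and gap: "y$j - \<gamma> * (A *v y)$j \<le> 1"
  shows "y$j ^ (2^(k+1)) - \<gamma> * ((A *v vpow y (2^k))$j)^2 \<le> 2^(k+1) * B^(2^(k+1) - 1)"
proof -
  have "((A *v y)$j) ^ (2^k) \<le> (A *v vpow y (2^k))$j"
    by (rule stochastic_mv_power_le[OF A])
  moreover have "0 \<le> (A *v y)$j"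
    using nonneg_rowsum_mv_nonneg[OF A] y(1) by blast
  ultimately have "y$j ^ (2 * 2^k) - \<gamma> * ((A *v vpow y (2^k))$j)^2 \<le> real (2 * 2^k) * B ^ (2 * 2^k - 1)"
    using y gap \<gamma> by (intro power_sub_discounted_square_le) auto
  then show ?thesis
    by simp
qed

text \<open>A discounted law of total variance. With \<open>x' = y^(2^(k+1))\<close>,
  \<open>z = x' - \<gamma> (A y^(2^k))^2\<close> and \<open>g = (Ah - A) x'\<close> one has \<open>\<gamma> Var = \<gamma> Ah x' + (z - x') - \<gamma> g\<close>.
  Under the resolvent \<open>R\<close> of \<open>Ah\<close> the first two terms telescope, \<open>\<gamma> R Ah x' = R x' - x'\<close>,
  leaving \<open>R z - x' - \<gamma> R g\<close>, and the gap condition bounds \<open>z\<close> entrywise.\<close>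

lemma resolvent_variance_le:
  fixes A Ah :: "real^'n::finite^'n" and y :: "real^'n"
  assumes A: "stochastic A" and Ah: "stochastic Ah" and \<gamma>: "0 \<le> \<gamma>" "\<gamma> < 1"
    and y_nonneg: "\<And>j. 0 \<le> y$j" and y_le: "\<And>j. y$j \<le> B"
    and gap: "\<And>j. y$j - \<gamma> * (A *v y)$j \<le> 1"
  shows "\<gamma> * (resolvent \<gamma> Ah *v nsvar A (vpow y (2^k)))$s
           \<le> 2^(k+1) * B^(2^(k+1) - 1) / (1 - \<gamma>)
             + \<gamma> * (resolvent \<gamma> Ah *v (\<chi> j. \<bar>((Ah - A) *v vpow y (2^(k+1)))$j\<bar>))$s"
proof -
  let ?M = "resolvent \<gamma> Ah" and ?x = "vpow y (2^(k+1))"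
  define c :: real where "c = 2^(k+1) * B^(2^(k+1) - 1)"
  define g where "g = (Ah - A) *v ?x"
  define z where "z = ?x - \<gamma> *\<^sub>R vpow (A *v vpow y (2^k)) 2"
  have M: "nonneg_rowsum ?M (1 / (1 - \<gamma>))"
    using resolvent_nonneg_rowsum[OF Ah \<gamma>] .
  have "\<gamma> *\<^sub>R nsvar A (vpow y (2^k)) = \<gamma> *\<^sub>R (Ah *v ?x) + (z - ?x) - \<gamma> *\<^sub>R g"
    by (simp add: nsvar_def vpow_vpow z_def g_def matrix_vector_mult_diff_rdistrib algebra_simps)
  from arg_cong[OF this, of "\<lambda>v. ?M *v v"]
  have "\<gamma> *\<^sub>R (?M *v nsvar A (vpow y (2^k)))
      = \<gamma> *\<^sub>R (?M *v (Ah *v ?x)) + (?M *v z - ?M *v ?x) - \<gamma> *\<^sub>R (?M *v g)"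
    by (simp only: matrix_vector_mult_scaleR matrix_vector_right_distrib
        matrix_vector_mult_diff_distrib)
  also have "\<gamma> *\<^sub>R (?M *v (Ah *v ?x)) = ?M *v ?x - ?x"
    by (rule resolvent_mv_step[OF Ah \<gamma>])
  finally have "\<gamma> *\<^sub>R (?M *v nsvar A (vpow y (2^k))) = ?M *v z - ?x - \<gamma> *\<^sub>R (?M *v g)"
    by simp
  from arg_cong[OF this, of "\<lambda>v. v$s"]
  have split: "\<gamma> * (?M *v nsvar A (vpow y (2^k)))$s = (?M *v z)$s - ?x$s - \<gamma> * (?M *v g)$s"
    by (simp only: vector_minus_component vector_scaleR_component real_scaleR_def)
  have z_le: "z$j \<le> c" for j
    using stochastic_power_gap_le[OF A _ _ y_nonneg y_le gap] \<gamma> by (simp add: z_def c_def)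
  have "(?M *v z)$s \<le> c / (1 - \<gamma>)"
    using nonneg_rowsum_mv_le_const[OF M, of z c s] z_le by simp
  moreover have "0 \<le> ?x$s"
    using y_nonneg by simp
  moreover have "- (?M *v g)$s \<le> (?M *v (\<chi> j. \<bar>g$j\<bar>))$s"
    using nonneg_rowsum_mv_abs[OF M, of g s] by linarith
  ultimately show ?thesis
    using split mult_left_mono[OF \<open>- (?M *v g)$s \<le> _\<close> \<gamma>(1)] unfolding c_def g_def by linarith
qed

section \<open>Scalar estimates\<close>

lemma sqrt_sum_le_sum_sqrt:
  assumes "finite I" "\<And>i. i \<in> I \<Longrightarrow> 0 \<le> f i"
  shows "sqrt (sum f I) \<le> (\<Sum>i\<in>I. sqrt (f i))"
  using assms
proof (induction I rule: finite_induct)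
  case empty
  then show ?case by simp
next
  case (insert a I)
  have "sqrt (sum f (insert a I)) = sqrt (f a + sum f I)"
    using insert by simp
  also have "\<dots> \<le> sqrt (f a) + sqrt (sum f I)"
    using insert by (intro sqrt_add_le_add_sqrt) (auto intro: sum_nonneg)
  also have "\<dots> \<le> sqrt (f a) + (\<Sum>i\<in>I. sqrt (f i))"
    using insert by simp
  finally show ?case
    using insert by simp
qed

lemma mult_sqrt_powr_two_minus:
  assumes "0 \<le> (t::real)"
  shows "t * sqrt (t powr (2 - 1/2^j)) = t powr (2 - 1/2^(Suc j))"
proof (cases "t = 0")
  case True
  then show ?thesis by simp
next
  case False
  then have "t * sqrt (t powr (2 - 1/2^j)) = t powr (1 + (2 - 1/2^j)/2)"
    using assms by (simp add: powr_half_sqrt_powr[symmetric] powr_add)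
  also have "1 + (2 - 1/2^j)/2 = (2 - 1/2^(Suc j)::real)"
    by (simp add: field_simps)
  finally show ?thesis .
qed

lemma two_powr_Suc_div_le_sqrt2: "(2::real) powr (real (i+1) / 2^(i+1)) \<le> sqrt 2"
proof -
  have "2 * (i + 1) \<le> (2::nat)^(i+1)"
    by (induction i) simp_all
  then have "real (2 * (i + 1)) \<le> real ((2::nat)^(i+1))"
    by linarith
  then have "real (i+1) / 2^(i+1) \<le> 1/2"
    by (simp add: field_simps)
  then have "(2::real) powr (real (i+1) / 2^(i+1)) \<le> 2 powr (1/2)"
    by (intro powr_mono) auto
  then show ?thesis
    by (simp add: powr_half_sqrt)
qed

definition unroll_weight :: "nat \<Rightarrow> nat \<Rightarrow> real" where
  "unroll_weight L k = (\<Sum>i\<in>{k..<L}. 2 powr (real (i+1) / 2^(i+1-k)))"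

lemma sqrt_unroll_weight_le:
  assumes "k < L"
  shows "sqrt (2^(k+1)) + sqrt (unroll_weight L (Suc k)) \<le> unroll_weight L k"
proof -
  have "sqrt (unroll_weight L (Suc k)) \<le> (\<Sum>i\<in>{Suc k..<L}. sqrt (2 powr (real (i+1) / 2^(i+1-Suc k))))"
    unfolding unroll_weight_def by (intro sqrt_sum_le_sum_sqrt) auto
  also have "\<dots> = (\<Sum>i\<in>{Suc k..<L}. 2 powr (real (i+1) / 2^(i+1-k)))"
  proof (intro sum.cong refl)
    fix i
    assume "i \<in> {Suc k..<L}"
    then have "i + 1 - k = Suc (i + 1 - Suc k)"
      by auto
    then have "(2::real)^(i+1-k) = 2 * 2^(i+1-Suc k)"
      by simp
    then show "sqrt (2 powr (real (i+1) / 2^(i+1-Suc k))) = 2 powr (real (i+1) / 2^(i+1-k))"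
      by (simp add: powr_half_sqrt_powr[symmetric] field_simps)
  qed
  finally have "sqrt (unroll_weight L (Suc k)) \<le> (\<Sum>i\<in>{Suc k..<L}. 2 powr (real (i+1) / 2^(i+1-k)))" .
  moreover have "sqrt (2^(k+1)) = (2::real) powr (real (k+1) / 2^(k+1-k))"
  proof -
    have "sqrt (2^(k+1)) = sqrt ((2::real) powr (real (k+1)))"
      using powr_realpow[of 2 "k+1"] by simp
    then show ?thesis
      by (simp add: powr_half_sqrt_powr)
  qed
  moreover have "unroll_weight L k =
      2 powr (real (k+1) / 2^(k+1-k)) + (\<Sum>i\<in>{Suc k..<L}. 2 powr (real (i+1) / 2^(i+1-k)))"
    unfolding unroll_weight_def using assms by (subst sum.atLeast_Suc_lessThan) auto
  ultimately show ?thesis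
    by simp
qed

lemma unroll_weight_0_le: "unroll_weight L 0 \<le> sqrt 2 * real L"
  unfolding unroll_weight_def
  using sum_mono[of "{0..<L}" _ "\<lambda>_. sqrt 2", OF two_powr_Suc_div_le_sqrt2] by (simp add: mult.commute)

text \<open>Unrolling \<open>v k \<le> \<surd>(2^(k+1)) Q + t \<surd>(v (k+1))\<close> down from level \<open>L\<close>: each square root
  halves the exponents accumulated so far, and \<open>t \<surd>Q \<le> Q\<close> absorbs the factor \<open>t\<close>.\<close>

lemma sqrt_recursion_unroll:
  fixes v :: "nat \<Rightarrow> real"
  assumes t: "0 \<le> t" "t^2 \<le> Q"
    and rec: "\<And>k. k < L \<Longrightarrow> v k \<le> sqrt (2^(k+1)) * Q + t * sqrt (v (Suc k))"
    and last: "v L \<le> t"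
    and "k \<le> L"
  shows "v k \<le> Q * unroll_weight L k + t powr (2 - 1/2^(L-k))"
  using \<open>k \<le> L\<close>
proof (induction rule: inc_induct)
  case base
  then show ?case
    using last t by (cases "t = 0") (simp_all add: unroll_weight_def)
next
  case (step k)
  have Q: "0 \<le> Q"
    using t by (meson order_trans zero_le_power2)
  define F where "F = unroll_weight L (Suc k)"
  define T where "T = t powr (2 - 1/2^(L - Suc k))"
  have "F \<ge> 0" "T \<ge> 0"
    unfolding F_def T_def unroll_weight_def by (auto intro: sum_nonneg)
  have "t * sqrt (v (Suc k)) \<le> t * sqrt (Q * F) + t * sqrt T"
    using step.IH \<open>F \<ge> 0\<close> \<open>T \<ge> 0\<close> Q t(1) unfolding F_def T_def
    by (simp flip: distrib_left,
        intro mult_left_mono order_trans[OF real_sqrt_le_mono sqrt_add_le_add_sqrt]) auto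
  moreover have "t * sqrt (Q * F) \<le> Q * sqrt F"
  proof -
    have "t * sqrt (Q * F) = sqrt (t^2) * sqrt Q * sqrt F"
      using t(1) by (simp add: real_sqrt_mult)
    also have "\<dots> \<le> sqrt Q * sqrt Q * sqrt F"
      using t Q \<open>F \<ge> 0\<close> by (intro mult_right_mono real_le_rsqrt) auto
    finally show ?thesis
      using Q by simp
  qed
  moreover have "Q * (sqrt (2^(k+1)) + sqrt F) \<le> Q * unroll_weight L k"
    using sqrt_unroll_weight_le[OF step.hyps(2)] Q unfolding F_def by (rule mult_left_mono)
  moreover have "t * sqrt T = t powr (2 - 1/2^(L - k))"
  proof -
    have "L - k = Suc (L - Suc k)"
      using step.hyps by auto
    then show ?thesis
      unfolding T_def by (simp only: mult_sqrt_powr_two_minus[OF t(1)])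
  qed
  ultimately show ?case
    using rec[OF step.hyps(2)] by (simp add: algebra_simps)
qed

text \<open>For \<open>t \<ge> \<beta>\<close> use \<open>t^(-\<epsilon>) \<le> \<beta>^(-\<epsilon>) \<le> 2\<close>; for \<open>t < \<beta>\<close> use \<open>t^(1-\<epsilon>) \<le> \<beta>^(1-\<epsilon>) \<le> 2\<beta> \<le> 2\<surd>\<beta>\<close>.\<close>

lemma powr_two_minus_le:
  assumes t: "0 \<le> (t::real)" and \<beta>: "0 < \<beta>" "\<beta> \<le> 1" and \<beta>_powr: "(1/\<beta>) powr \<epsilon> \<le> 2"
    and \<epsilon>: "0 \<le> \<epsilon>" "\<epsilon> \<le> 1"
  shows "t powr (2 - \<epsilon>) \<le> 2 * (t * sqrt \<beta> + t^2)"
proof (cases "t = 0")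
  case True
  then show ?thesis by simp
next
  case False
  then have "0 < t" using t by simp
  have "t powr (1 - \<epsilon>) \<le> 2 * (t + sqrt \<beta>)"
  proof (cases "\<beta> \<le> t")
    case True
    have "1 / t powr \<epsilon> \<le> 1 / \<beta> powr \<epsilon>"
      using True \<beta> \<epsilon> by (intro divide_left_mono powr_mono2) auto
    then have "t * (1 / t powr \<epsilon>) \<le> t * 2"
      using \<beta>_powr \<beta> \<open>0 < t\<close> by (intro mult_left_mono) (auto simp: powr_divide)
    then have "t powr (1 - \<epsilon>) \<le> 2 * t"
      using \<open>0 < t\<close> by (simp add: powr_diff mult.commute)
    moreover have "0 \<le> sqrt \<beta>"
      using \<beta> by simp
    ultimately show ?thesis
      by (smt (verit))
  next
    case False
    have "t powr (1 - \<epsilon>) \<le> \<beta> powr (1 - \<epsilon>)"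
      using False \<open>0 < t\<close> \<epsilon> by (intro powr_mono2) auto
    also have "\<dots> = \<beta> * (1/\<beta>) powr \<epsilon>"
      using \<beta> by (simp add: powr_diff powr_divide)
    also have "\<dots> \<le> \<beta> * 2"
      using \<beta> \<beta>_powr by (intro mult_left_mono) auto
    also have "\<beta> \<le> sqrt \<beta>"
      using \<beta> by (intro real_le_rsqrt) (simp add: power2_eq_square mult_left_le)
    finally show ?thesis
      using \<open>0 < t\<close> by simp
  qed
  then have "t * t powr (1 - \<epsilon>) \<le> t * (2 * (t + sqrt \<beta>))"
    using \<open>0 < t\<close> by (intro mult_left_mono) auto
  then show ?thesis
    using \<open>0 < t\<close> by (simp add: powr_add[of t 1 "1 - \<epsilon>", simplified] algebra_simps power2_eq_square)
qed

lemma sqrt_recursion_bound: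
  fixes v :: "nat \<Rightarrow> real"
  assumes t: "0 \<le> t" and \<beta>: "0 < \<beta>" "\<beta> \<le> 1" "(1/\<beta>) powr (1/2^L) \<le> 2"
    and step: "\<And>k. k < L \<Longrightarrow> v k \<le> sqrt (2^(k+1)) * (t * sqrt \<beta> + t^2) + t * sqrt (v (Suc k))"
    and last: "v L \<le> t"
  shows "v 0 \<le> (sqrt 2 * real L + 2) * (t * sqrt \<beta> + t^2)"
proof -
  let ?Q = "t * sqrt \<beta> + t^2"
  have "0 \<le> ?Q" "t^2 \<le> ?Q"
    using t \<beta> by auto
  then have "v 0 \<le> ?Q * unroll_weight L 0 + t powr (2 - 1/2^L)"
    using sqrt_recursion_unroll[OF t _ step last, of 0] by simp
  also have "?Q * unroll_weight L 0 \<le> ?Q * (sqrt 2 * real L)"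
    using unroll_weight_0_le \<open>0 \<le> ?Q\<close> by (rule mult_left_mono)
  also have "t powr (2 - 1/2^L) \<le> 2 * ?Q"
    using powr_two_minus_le[OF t \<beta>] by simp
  finally show ?thesis
    by (simp add: algebra_simps)
qed

lemma discounted_recursion_square:
  fixes \<gamma> t B W W' c X N :: real
  assumes \<gamma>: "0 \<le> \<gamma>" "\<gamma> < 1" and t: "0 \<le> t" and B: "0 \<le> B" and W: "0 \<le> W" "0 \<le> W'"
    and N: "0 \<le> N" and X: "0 < X" and c: "0 \<le> c" "c \<le> N * X^2 / (B+1)"
    and rec: "(\<gamma>*W)^2 \<le> \<gamma>/(1-\<gamma>) * (c/(1-\<gamma>) + \<gamma>*(t*W' + t^2*N*X^2/(1-\<gamma>)))"
  shows "(t*\<gamma>*(1-\<gamma>)*W/X)^2 \<le> N * (t * sqrt (1/(B+1)) + t^2)^2 + t^2 * (t*\<gamma>*(1-\<gamma>)*W'/X^2)"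
proof -
  define u where "u = t*\<gamma>*(1-\<gamma>)*W/X"
  define u' where "u' = t*\<gamma>*(1-\<gamma>)*W'/X^2"
  define Q where "Q = t * sqrt (1/(B+1)) + t^2"
  have "0 \<le> u'"
    unfolding u'_def using \<gamma> t W X by simp
  have "u^2 = (t^2*(1-\<gamma>)^2/X^2) * (\<gamma>*W)^2"
    unfolding u_def by (simp add: power_mult_distrib power_divide)
  also have "\<dots> \<le> (t^2*(1-\<gamma>)^2/X^2) * (\<gamma>/(1-\<gamma>) * (c/(1-\<gamma>) + \<gamma>*(t*W' + t^2*N*X^2/(1-\<gamma>))))"
    using rec by (intro mult_left_mono) auto
  also have "\<dots> = t^2*\<gamma>*(c/X^2) + t^2*\<gamma>*u' + t^4*\<gamma>^2*N"
  proof -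
    define a where "a = 1 - \<gamma>"
    have "0 < a"
      using \<gamma> by (simp add: a_def)
    then have "(t^2*a^2/X^2) * (\<gamma>/a * (c/a + \<gamma>*(t*W' + t^2*N*X^2/a)))
        = t^2*\<gamma>*(c/X^2) + t^2*\<gamma>*(t*\<gamma>*a*W'/X^2) + t^4*\<gamma>^2*N"
      using X by (simp add: field_simps power2_eq_square power4_eq_xxxx)
    then show ?thesis
      unfolding u'_def a_def .
  qed
  also have "\<dots> \<le> t^2*(N/(B+1)) + t^2*u' + t^4*N"
  proof -
    have "c/X^2 \<le> N/(B+1)"
      using c X B by (simp add: field_simps)
    moreover have "\<gamma>^2 \<le> 1"
      using \<gamma> by (simp add: power_le_one)
    ultimately show ?thesis
      using \<gamma> N c \<open>0 \<le> u'\<close> X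
      by (intro add_mono mult_mono mult_left_le_one_le mult_right_le_one_le) auto
  qed
  also have "\<dots> \<le> N*Q^2 + t^2*u'"
  proof -
    have "t^2*(1/(B+1)) + t^4 \<le> Q^2"
      unfolding Q_def using t B
      by (simp add: power2_sum power_mult_distrib real_sqrt_pow2 power2_eq_square[of "t^2"] field_simps)
    then show ?thesis
      using mult_left_mono[OF _ N] by (fastforce simp: field_simps)
  qed
  finally show ?thesis
    unfolding u_def u'_def Q_def .
qed

lemma discounted_recursion_normalize:
  fixes \<gamma> t B W W' c X N :: real
  assumes \<gamma>: "0 \<le> \<gamma>" "\<gamma> < 1" and t: "0 \<le> t" and B: "0 \<le> B" and W: "0 \<le> W" "0 \<le> W'"
    and N: "0 \<le> N" and X: "0 < X" and c: "0 \<le> c" "c \<le> N * X^2 / (B+1)"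
    and rec: "(\<gamma>*W)^2 \<le> \<gamma>/(1-\<gamma>) * (c/(1-\<gamma>) + \<gamma>*(t*W' + t^2*N*X^2/(1-\<gamma>)))"
  shows "t*\<gamma>*(1-\<gamma>)*W/X \<le> sqrt N * (t * sqrt (1/(B+1)) + t^2) + t * sqrt (t*\<gamma>*(1-\<gamma>)*W'/X^2)"
proof -
  define u' where "u' = t*\<gamma>*(1-\<gamma>)*W'/X^2"
  let ?u = "t*\<gamma>*(1-\<gamma>)*W/X" and ?Q = "t * sqrt (1/(B+1)) + t^2"
  have "0 \<le> ?u" "0 \<le> u'" "0 \<le> ?Q"
    unfolding u'_def using \<gamma> t W X B by simp_all
  have "?u \<le> sqrt (N * ?Q^2 + t^2 * u')"
    using discounted_recursion_square[OF assms] \<open>0 \<le> ?u\<close> real_le_rsqrt unfolding u'_def by blast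
  also have "\<dots> \<le> sqrt (N * ?Q^2) + sqrt (t^2 * u')"
    using N \<open>0 \<le> u'\<close> by (intro sqrt_add_le_add_sqrt) auto
  also have "\<dots> = sqrt N * ?Q + t * sqrt u'"
    using \<open>0 \<le> ?Q\<close> t by (simp add: real_sqrt_mult)
  finally show ?thesis
    unfolding u'_def .
qed

lemma powr_inverse_iterated_log_le_two:
  fixes B :: real
  assumes "0 \<le> B" "L = nat \<lceil>log 2 (log 2 (B + 4))\<rceil>"
  shows "(B + 1) powr (1 / 2^L) \<le> 2"
proof -
  have "2 \<le> log 2 (B + 4)"
    using assms by (simp add: le_log_iff)
  moreover from this have "log 2 (B + 4) \<le> 2 ^ L"
  proof -
    have "log 2 (log 2 (B + 4)) \<le> real L"
      using assms by linarith
    then have "log 2 (B + 4) \<le> 2 powr real L"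
      using \<open>2 \<le> log 2 (B + 4)\<close> by (simp add: log_le_iff)
    then show ?thesis
      by (simp add: powr_realpow)
  qed
  ultimately have "(B + 4) powr (1 / 2^L) \<le> (B + 4) powr (1 / log 2 (B + 4))"
    using assms by (intro powr_mono) (auto simp: field_simps)
  moreover have "(B + 1) powr (1 / 2^L) \<le> (B + 4) powr (1 / 2^L)"
    using assms by (intro powr_mono2) auto
  moreover have "(B + 4) powr (1 / log 2 (B + 4)) = 2"
    using assms by (simp add: powr_def log_def)
  ultimately show ?thesis
    by linarith
qed

lemma sqrt2_affine_bounds:
  "sqrt 2 * real L + 2 \<le> 2 * sqrt 2 * (real L + 1)" "sqrt 2 * real L + 3 \<le> 4 * (real L + 1)"
proof -
  have "1 \<le> sqrt 2" "sqrt 2 \<le> 4"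
    by (auto simp: real_le_lsqrt)
  have "0 \<le> sqrt 2 * real L" "2 * sqrt 2 * (real L + 1) = 2 * (sqrt 2 * real L) + 2 * sqrt 2"
    by (simp_all add: algebra_simps)
  then show "sqrt 2 * real L + 2 \<le> 2 * sqrt 2 * (real L + 1)"
    using \<open>1 \<le> sqrt 2\<close> by linarith
  have "sqrt 2 * real L \<le> 4 * real L"
    using \<open>sqrt 2 \<le> 4\<close> by (auto intro: mult_right_mono)
  then show "sqrt 2 * real L + 3 \<le> 4 * (real L + 1)"
    by (simp add: distrib_left)
qed

lemma discounted_error_arith:
  fixes \<gamma> t B v E :: real and L :: nat
  assumes "\<gamma> < 1" "0 \<le> B" "0 \<le> t"
    and v: "v \<le> (sqrt 2 * real L + 2) * (t * sqrt (1/(B+1)) + t^2)"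
    and E: "E \<le> (B+1)/(1-\<gamma>) * (v + t^2)"
  shows "E \<le> 4 * (real L + 1) * t^2 / (1 - \<gamma>) * (B + 1)
             + 2 * (real L + 1) / (1 - \<gamma>) * sqrt (2 * t^2 * (B + 1))"
proof -
  have "(B+1) * (v + t^2) \<le> (B+1) * ((sqrt 2 * real L + 2) * (t * sqrt (1/(B+1)) + t^2) + t^2)"
    using v assms by (intro mult_left_mono) auto
  also have "\<dots> = (sqrt 2 * real L + 2) * t * sqrt (B+1) + (sqrt 2 * real L + 3) * t^2 * (B+1)"
  proof -
    have regroup: "\<And>b a s t::real. b * (a * (t * s + t^2) + t^2) = a * t * (b * s) + (a + 1) * t^2 * b"
      by (simp add: algebra_simps)
    have "(B+1) * sqrt (1/(B+1)) = sqrt (B+1)"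
      using assms by (simp add: real_sqrt_divide field_simps)
    then show ?thesis
      unfolding regroup by (simp add: algebra_simps)
  qed
  also have "\<dots> \<le> (2 * sqrt 2 * (real L + 1)) * t * sqrt (B+1) + (4 * (real L + 1)) * t^2 * (B+1)"
    using sqrt2_affine_bounds assms by (intro add_mono mult_right_mono) auto
  finally have "(B+1) * (v + t^2) \<le> (2 * sqrt 2 * (real L + 1)) * t * sqrt (B+1) + (4 * (real L + 1)) * t^2 * (B+1)" .
  then have "E \<le> ((2 * sqrt 2 * (real L + 1)) * t * sqrt (B+1) + (4 * (real L + 1)) * t^2 * (B+1)) / (1 - \<gamma>)"
    using E assms by (smt (verit) divide_right_mono times_divide_eq_left)
  moreover have "sqrt (2 * t^2 * (B + 1)) = sqrt 2 * t * sqrt (B + 1)"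
    using assms by (simp add: real_sqrt_mult)
  ultimately show ?thesis
    by (simp add: add_divide_distrib algebra_simps)
qed

section \<open>The moment recursion\<close>

text \<open>In the application \<open>y\<close> is the centred value \<open>Vbar\<close>, \<open>B = \<parallel>Vbar\<parallel>\<^sub>\<infinity>\<close> and
  \<open>t = \<surd>(\<alpha>/n)\<close>; \<open>deviation\<close> is the hypothesis of the main theorem.\<close>

locale moment_recursion =
  fixes A Ah :: "real^'n::finite^'n" and \<gamma> t B :: real and y :: "real^'n" and L :: nat
  assumes A: "stochastic A" and Ah: "stochastic Ah" and \<gamma>: "0 \<le> \<gamma>" "\<gamma> < 1" and t: "0 \<le> t"
    and y_nonneg: "\<And>j. 0 \<le> y$j" and y_le: "\<And>j. y$j \<le> B"
    and gap: "\<And>j. y$j - \<gamma> * (A *v y)$j \<le> 1"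
    and deviation: "\<And>k j. k \<le> L \<Longrightarrow>
      \<bar>((Ah - A) *v vpow y (2^k))$j\<bar> \<le> t * sqrt (nsvar A (vpow y (2^k)) $ j) + t^2 * 2^k * (B+1)^(2^k)"
begin

definition sd :: "nat \<Rightarrow> real^'n" where
  "sd k = (\<chi> j. sqrt (nsvar A (vpow y (2^k)) $ j))"

definition max_resolvent_sd :: "nat \<Rightarrow> real" where
  "max_resolvent_sd k = Max (range (\<lambda>s. (resolvent \<gamma> Ah *v sd k)$s))"

text \<open>\<open>(B + 1)^(2^k)\<close> is the scale of \<open>y^(2^k)\<close>; dividing by it makes the recursion
  satisfied by \<open>scaled_sd\<close> uniform in \<open>k\<close>.\<close>

definition scaled_sd :: "nat \<Rightarrow> real" where
  "scaled_sd k = t * \<gamma> * (1 - \<gamma>) * max_resolvent_sd k / (B + 1)^(2^k)"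

lemma B_nonneg: "0 \<le> B"
  using y_nonneg y_le order_trans by blast

lemma nonneg_rowsum_resolvent_Ah: "nonneg_rowsum (resolvent \<gamma> Ah) (1 / (1 - \<gamma>))"
  using resolvent_nonneg_rowsum[OF Ah \<gamma>] .

lemma sd_nonneg: "0 \<le> sd k $ j"
  by (simp add: sd_def nsvar_nonneg[OF A])

lemma resolvent_sd_le_max: "(resolvent \<gamma> Ah *v sd k)$s \<le> max_resolvent_sd k"
  unfolding max_resolvent_sd_def by (rule Max_ge) auto

lemma max_resolvent_sd_attained: "\<exists>s. max_resolvent_sd k = (resolvent \<gamma> Ah *v sd k)$s"
proof -
  have "max_resolvent_sd k \<in> range (\<lambda>s. (resolvent \<gamma> Ah *v sd k)$s)"
    unfolding max_resolvent_sd_def by (rule Max_in) auto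
  then show ?thesis by auto
qed

lemma max_resolvent_sd_nonneg: "0 \<le> max_resolvent_sd k"
  using nonneg_rowsum_mv_nonneg[OF nonneg_rowsum_resolvent_Ah sd_nonneg] resolvent_sd_le_max order_trans by blast

lemma resolvent_deviation_le:
  assumes "k \<le> L"
  shows "(resolvent \<gamma> Ah *v (\<chi> j. \<bar>((Ah - A) *v vpow y (2^k))$j\<bar>))$s
           \<le> t * max_resolvent_sd k + t^2 * 2^k * (B+1)^(2^k) / (1 - \<gamma>)"
proof -
  have "(resolvent \<gamma> Ah *v (\<chi> j. \<bar>((Ah - A) *v vpow y (2^k))$j\<bar>))$s
      \<le> (resolvent \<gamma> Ah *v (t *\<^sub>R sd k + (t^2 * 2^k * (B+1)^(2^k)) *\<^sub>R 1))$s"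
    using deviation[OF assms] by (intro nonneg_rowsum_mv_mono[OF nonneg_rowsum_resolvent_Ah]) (simp add: sd_def)
  also have "\<dots> = t * (resolvent \<gamma> Ah *v sd k)$s + t^2 * 2^k * (B+1)^(2^k) / (1 - \<gamma>)"
    by (simp add: nonneg_rowsum_mv_affine[OF nonneg_rowsum_resolvent_Ah])
  also have "\<dots> \<le> t * max_resolvent_sd k + t^2 * 2^k * (B+1)^(2^k) / (1 - \<gamma>)"
    using resolvent_sd_le_max t by (simp add: mult_left_mono)
  finally show ?thesis .
qed

lemma max_resolvent_sd_step:
  assumes "k < L"
  shows "(\<gamma> * max_resolvent_sd k)^2
    \<le> \<gamma> / (1 - \<gamma>) * (2^(k+1) * B^(2^(k+1) - 1) / (1 - \<gamma>)
        + \<gamma> * (t * max_resolvent_sd (Suc k) + t^2 * 2^(k+1) * (B+1)^(2^(k+1)) / (1 - \<gamma>)))"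
    (is "_ \<le> \<gamma> / (1 - \<gamma>) * (?c + \<gamma> * ?d)")
proof -
  let ?M = "resolvent \<gamma> Ah" and ?var = "nsvar A (vpow y (2^k))"
  obtain s where s: "max_resolvent_sd k = (?M *v sd k)$s"
    using max_resolvent_sd_attained by blast
  have "vpow (sd k) 2 = ?var"
    by (simp add: vec_eq_iff sd_def nsvar_nonneg[OF A])
  then have "(max_resolvent_sd k)^2 \<le> 1 / (1 - \<gamma>) * (?M *v ?var)$s"
    using nonneg_rowsum_mv_square[OF nonneg_rowsum_resolvent_Ah, of "sd k" s] s by simp
  have "(\<gamma> * max_resolvent_sd k)^2 = \<gamma>^2 * (max_resolvent_sd k)^2"
    by (rule power_mult_distrib)
  also have "\<dots> \<le> \<gamma>^2 * (1 / (1 - \<gamma>) * (?M *v ?var)$s)"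
    using \<open>(max_resolvent_sd k)^2 \<le> _\<close> by (rule mult_left_mono) simp
  also have "\<dots> = \<gamma> / (1 - \<gamma>) * (\<gamma> * (?M *v ?var)$s)"
    by (simp add: power2_eq_square)
  finally have sd_le_var: "(\<gamma> * max_resolvent_sd k)^2 \<le> \<gamma> / (1 - \<gamma>) * (\<gamma> * (?M *v ?var)$s)" .
  have "\<gamma> * (?M *v ?var)$s \<le> ?c + \<gamma> * (?M *v (\<chi> j. \<bar>((Ah - A) *v vpow y (2^(k+1)))$j\<bar>))$s"
    by (rule resolvent_variance_le[OF A Ah \<gamma> y_nonneg y_le gap])
  also have "\<dots> \<le> ?c + \<gamma> * ?d"
    using resolvent_deviation_le[of "Suc k" s] assms \<gamma> by (intro add_left_mono mult_left_mono) simp_all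
  finally have "\<gamma> / (1 - \<gamma>) * (\<gamma> * (?M *v ?var)$s) \<le> \<gamma> / (1 - \<gamma>) * (?c + \<gamma> * ?d)"
    using \<gamma> by (intro mult_left_mono) simp_all
  with sd_le_var show ?thesis
    by (rule order_trans)
qed

lemma scaled_sd_step:
  assumes "k < L"
  shows "scaled_sd k \<le> sqrt (2^(k+1)) * (t * sqrt (1/(B+1)) + t^2) + t * sqrt (scaled_sd (Suc k))"
proof -
  let ?X = "(B+1)^(2^k)"
  have X_sq: "?X^2 = (B+1)^(2^(k+1))"
    by (simp flip: power_mult add: mult.commute)
  have "(B+1)^(2^(k+1)) = (B+1) * (B+1)^(2^(k+1) - 1)"
    by (simp flip: power_Suc)
  moreover have "B^(2^(k+1) - 1) \<le> (B+1)^(2^(k+1) - 1)"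
    using B_nonneg by (intro power_mono) auto
  ultimately have "2^(k+1) * B^(2^(k+1) - 1) \<le> 2^(k+1) * ?X^2 / (B+1)"
    unfolding X_sq using B_nonneg by simp
  then have "t*\<gamma>*(1-\<gamma>)*max_resolvent_sd k/?X
      \<le> sqrt (2^(k+1)) * (t * sqrt (1/(B+1)) + t^2)
        + t * sqrt (t*\<gamma>*(1-\<gamma>)*max_resolvent_sd (Suc k)/?X^2)"
    using max_resolvent_sd_step[OF assms] B_nonneg
    by (intro discounted_recursion_normalize[OF \<gamma> t B_nonneg max_resolvent_sd_nonneg
          max_resolvent_sd_nonneg]) (simp_all add: X_sq)
  then show ?thesis
    unfolding scaled_sd_def X_sq by simp
qed

lemma scaled_sd_last: "scaled_sd L \<le> t"
proof -
  have "sd L $ j \<le> B^(2^L)" for j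
  proof -
    have "nsvar A (vpow y (2^L)) $ j \<le> (A *v vpow y (2^(L+1)))$j"
      by (simp add: nsvar_def vpow_vpow mult.commute)
    also have "\<dots> \<le> 1 * B^(2^(L+1))"
      using y_nonneg y_le by (intro nonneg_rowsum_mv_le_const[OF A]) (simp add: power_mono)
    also have "\<dots> = (B^(2^L))^2"
      by (simp flip: power_mult add: mult.commute)
    finally show ?thesis
      unfolding sd_def using B_nonneg by (simp add: real_sqrt_le_iff real_le_lsqrt)
  qed
  then have "max_resolvent_sd L \<le> 1 / (1 - \<gamma>) * B^(2^L)"
    using max_resolvent_sd_attained[of L] nonneg_rowsum_mv_le_const[OF nonneg_rowsum_resolvent_Ah] by metis
  then have "t * \<gamma> * (1 - \<gamma>) * max_resolvent_sd L \<le> t * \<gamma> * (1 - \<gamma>) * (1 / (1 - \<gamma>) * B^(2^L))"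
    using t \<gamma> by (intro mult_left_mono) auto
  also have "\<dots> = t * \<gamma> * B^(2^L)"
    using \<gamma> by simp
  also have "\<dots> \<le> t * 1 * (B+1)^(2^L)"
    using t \<gamma> B_nonneg by (intro mult_mono power_mono) auto
  finally show ?thesis
    unfolding scaled_sd_def using B_nonneg by (simp add: divide_le_eq)
qed

lemma error_le_scaled_sd:
  "\<bar>\<gamma> * (resolvent \<gamma> Ah *v ((Ah - A) *v y))$s\<bar> \<le> (B+1) / (1-\<gamma>) * (scaled_sd 0 + t^2)"
proof -
  have "\<bar>\<gamma> * (resolvent \<gamma> Ah *v ((Ah - A) *v y))$s\<bar>
      \<le> \<gamma> * (resolvent \<gamma> Ah *v (\<chi> j. \<bar>((Ah - A) *v y)$j\<bar>))$s"
    using nonneg_rowsum_mv_abs[OF nonneg_rowsum_resolvent_Ah] \<gamma> by (simp add: abs_mult mult_left_mono)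
  also have "\<dots> \<le> \<gamma> * (t * max_resolvent_sd 0 + t^2 * (B+1) / (1 - \<gamma>))"
    using resolvent_deviation_le[of 0 s] \<gamma> by (intro mult_left_mono) simp_all
  also have "\<dots> \<le> (B+1) / (1-\<gamma>) * (scaled_sd 0 + t^2)"
  proof -
    have "(B+1) / (1-\<gamma>) * scaled_sd 0 = \<gamma> * (t * max_resolvent_sd 0)"
    proof -
      have "B + 1 \<noteq> 0" "1 - \<gamma> \<noteq> 0"
        using \<gamma> B_nonneg by auto
      moreover have "scaled_sd 0 = \<gamma> * (t * max_resolvent_sd 0) * (1 - \<gamma>) / (B + 1)"
        unfolding scaled_sd_def by (simp add: ac_simps)
      ultimately show ?thesis
        by simp
    qed
    moreover have "\<gamma> * (t^2 * (B+1) / (1 - \<gamma>)) \<le> 1 * (t^2 * (B+1) / (1 - \<gamma>))"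
      using \<gamma> B_nonneg by (intro mult_right_mono) auto
    ultimately show ?thesis
      by (simp add: distrib_left mult.commute)
  qed
  finally show ?thesis .
qed

theorem discounted_error_bound:
  assumes "(B + 1) powr (1 / 2^L) \<le> 2"
  shows "\<bar>\<gamma> * (resolvent \<gamma> Ah *v ((Ah - A) *v y))$s\<bar>
           \<le> 4 * (real L + 1) * t^2 / (1 - \<gamma>) * (B + 1)
             + 2 * (real L + 1) / (1 - \<gamma>) * sqrt (2 * t^2 * (B + 1))"
proof (rule discounted_error_arith[OF \<gamma>(2) B_nonneg t _ error_le_scaled_sd])
  show "scaled_sd 0 \<le> (sqrt 2 * real L + 2) * (t * sqrt (1/(B+1)) + t^2)"
    using assms B_nonneg by (intro sqrt_recursion_bound[OF t _ _ _ scaled_sd_step scaled_sd_last]) auto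
qed

end

section \<open>Policy evaluation\<close>

lemma Ppi_stochastic:
  assumes "is_kernel P" "is_policy \<pi>"
  shows "stochastic (Ppi P \<pi>)"
proof -
  have "(\<Sum>j\<in>UNIV. \<Sum>a\<in>UNIV. \<pi> s a * P s a j) = (\<Sum>a\<in>UNIV. \<pi> s a * (\<Sum>j\<in>UNIV. P s a j))" for s
    by (subst sum.swap) (simp add: sum_distrib_left)
  then show ?thesis
    using assms by (auto simp: nonneg_rowsum_def Ppi_def is_kernel_def is_policy_def intro!: sum_nonneg)
qed

lemma rpi_bounds:
  assumes "is_policy \<pi>" "\<forall>s a. 0 \<le> r s a \<and> r s a \<le> 1"
  shows "0 \<le> rpi r \<pi> $ s" "rpi r \<pi> $ s \<le> 1"
proof -
  have "(\<Sum>a\<in>UNIV. \<pi> s a * r s a) \<le> (\<Sum>a\<in>UNIV. \<pi> s a * 1)"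
    using assms by (intro sum_mono mult_left_mono) (auto simp: is_policy_def)
  then show "rpi r \<pi> $ s \<le> 1"
    using assms(1) by (simp add: rpi_def is_policy_def)
  show "0 \<le> rpi r \<pi> $ s"
    using assms by (auto simp: rpi_def is_policy_def intro!: sum_nonneg)
qed

lemma Vpi_eq_resolvent: "Vpi \<gamma> P \<pi> r = resolvent \<gamma> (Ppi P \<pi>) *v rpi r \<pi>"
  by (simp add: Vpi_def resolvent_def)

lemma abs_le_supnorm: "\<bar>x $ s\<bar> \<le> supnorm x"
  unfolding supnorm_def by (rule Max_ge) auto

lemma supnorm_le: "(\<And>s. \<bar>x $ s\<bar> \<le> c) \<Longrightarrow> supnorm x \<le> c"
  unfolding supnorm_def by (rule Max.boundedI) auto

lemma centered_resolvent_bounds: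
  assumes A: "stochastic A" and \<gamma>: "0 \<le> \<gamma>" "\<gamma> < 1" and r: "\<And>s. 0 \<le> r$s" "\<And>s. r$s \<le> 1"
  defines "V \<equiv> resolvent \<gamma> A *v r"
  defines "m \<equiv> Min (range (\<lambda>s. V$s))"
  shows "0 \<le> (V - m *\<^sub>R 1)$j" and "(V - m *\<^sub>R 1)$j - \<gamma> * (A *v (V - m *\<^sub>R 1))$j \<le> 1"
proof -
  have m_le: "m \<le> V$s" for s
    unfolding m_def by (rule Min_le) auto
  then show "0 \<le> (V - m *\<^sub>R 1)$j"
    by simp
  have "m \<in> range (\<lambda>s. V$s)"
    unfolding m_def by (rule Min_in) auto
  moreover have "0 \<le> V$s" for s
    unfolding V_def using nonneg_rowsum_mv_nonneg[OF resolvent_nonneg_rowsum[OF A \<gamma>]] r by blast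
  ultimately have "0 \<le> m"
    by auto
  have "V - \<gamma> *\<^sub>R (A *v V) = r"
    using resolvent_bellman[OF A \<gamma>, of r] by (simp add: V_def mat_1_minus_scaleR_mv)
  then have "(V - m *\<^sub>R 1)$j - \<gamma> * (A *v (V - m *\<^sub>R 1))$j = r$j - (1 - \<gamma>) * m"
    using nonneg_rowsum_mv_const[OF A, of m]
    by (auto simp: matrix_vector_mult_diff_distrib vec_eq_iff algebra_simps)
  moreover have "0 \<le> (1 - \<gamma>) * m"
    using \<open>0 \<le> m\<close> \<gamma> by simp
  ultimately show "(V - m *\<^sub>R 1)$j - \<gamma> * (A *v (V - m *\<^sub>R 1))$j \<le> 1"
    using r(2)[of j] by linarith
qed

theorem mainTheorem16:
  fixes P Phat :: "'s::finite \<Rightarrow> 'a::finite \<Rightarrow> 's \<Rightarrow> real"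
    and r :: "'s \<Rightarrow> 'a \<Rightarrow> real" and \<pi> :: "'s \<Rightarrow> 'a \<Rightarrow> real"
    and \<gamma> \<alpha> :: real and n L :: nat and Vbar :: "real^'s"
  assumes "is_kernel P" and "is_kernel Phat"
    and "\<forall>s a. 0 \<le> r s a \<and> r s a \<le> 1"
    and "0 < \<gamma>" and "\<gamma> < 1" and "0 < n" and "is_policy \<pi>" and "0 < \<alpha>"
    and "Vbar = Vpi \<gamma> P \<pi> r - (Min (range (\<lambda>s. Vpi \<gamma> P \<pi> r $ s))) *\<^sub>R (1::real^'s)"
    and "L = nat \<lceil>log 2 (log 2 (supnorm Vbar + 4))\<rceil>"
    and "\<forall>k\<le>L. \<forall>s.
           \<bar>((Ppi Phat \<pi> - Ppi P \<pi>) *v vpow Vbar (2^k)) $ s\<bar>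
             \<le> sqrt (\<alpha> * nsvar (Ppi P \<pi>) (vpow Vbar (2^k)) $ s / real n)
               + \<alpha> * 2^k / real n * (supnorm Vbar + 1) ^ (2^k)"
  shows "supnorm (Vpi \<gamma> Phat \<pi> r - Vpi \<gamma> P \<pi> r)
           \<le> 4 * (real L + 1) * \<alpha> / ((1 - \<gamma>) * real n) * (supnorm Vbar + 1)
             + 2 * (real L + 1) / (1 - \<gamma>) * sqrt (2 * \<alpha> * (supnorm Vbar + 1) / real n)"
proof -
  let ?A = "Ppi P \<pi>" and ?Ah = "Ppi Phat \<pi>" and ?t = "sqrt (\<alpha> / real n)"
  have A: "stochastic ?A" and Ah: "stochastic ?Ah" and \<gamma>: "0 \<le> \<gamma>" "\<gamma> < 1"
    using assms Ppi_stochastic by auto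
  have t_sq: "?t^2 = \<alpha> / real n"
    using assms by simp
  have Vbar: "0 \<le> Vbar$j" "Vbar$j - \<gamma> * (?A *v Vbar)$j \<le> 1" for j
    using centered_resolvent_bounds[OF A \<gamma> rpi_bounds[OF assms(7,3)]]
    by (simp_all add: assms(9) Vpi_eq_resolvent)
  interpret moment_recursion ?A ?Ah \<gamma> ?t "supnorm Vbar" Vbar L
  proof
    fix k j
    assume "k \<le> L"
    then show "\<bar>((?Ah - ?A) *v vpow Vbar (2^k))$j\<bar>
      \<le> ?t * sqrt (nsvar ?A (vpow Vbar (2^k)) $ j) + ?t^2 * 2^k * (supnorm Vbar + 1)^(2^k)"
      using assms(11) unfolding t_sq by (simp add: real_sqrt_mult real_sqrt_divide)
  qed (use A Ah \<gamma> Vbar assms(6,8) in \<open>auto intro: order_trans[OF abs_ge_self abs_le_supnorm]\<close>)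
  have "Vpi \<gamma> Phat \<pi> r - Vpi \<gamma> P \<pi> r = \<gamma> *\<^sub>R (resolvent \<gamma> ?Ah *v ((?Ah - ?A) *v Vbar))"
    unfolding Vpi_eq_resolvent assms(9) resolvent_perturbation[OF A Ah \<gamma>]
    by (simp add: stochastic_diff_mv_shift[OF A Ah])
  moreover have "(supnorm Vbar + 1) powr (1 / 2^L) \<le> 2"
    using powr_inverse_iterated_log_le_two B_nonneg assms(10) by blast
  ultimately show ?thesis
    using discounted_error_bound assms(6) unfolding t_sq
    by (intro supnorm_le) (simp add: field_simps)
qed

end
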